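(* Let $(p_k)_{k\ge0}$ be a probability distribution with $\mu:=\sum_kkp_k\in(0,\infty)$ and $\sum_kk(k-2)p_k>0$. If $\psi(H)=1$ for all $H$, then $$\sigma_\psi^2=f(\zeta)+\frac{\mu^2\zeta^2}{\mu-f''(\zeta)}+2\frac{\mu^3\zeta^4}{(\mu-f''(\zeta))^2}-f(\zeta^2)-2\frac{\mu\zeta^2}{\mu-f''(\zeta)}f'(\zeta^2)-\frac{\mu^2}{(\mu-f''(\zeta))^2}\big(\zeta^4f''(\zeta^2)+\zeta^2f'(\zeta^2)\big).$$
   Context: $f(z):=\sum_kp_kz^k$ and $\zeta$ is the unique root in $[0,1)$ of $f'(\zeta)=\mu\zeta$. $\mathcal T$ is the Galton–Watson tree whose root has offspring distribution $(p_k)$ and other vertices offspring distribution $\hat D-1$, $P(\hat D=k)=kp_k/\mu$, regarded as an unlabelled unrooted tree; $|T|$, $e(T)$, $n_k(T)$ are numbers of vertices, edges and vertices of degree $k$. $\mathbb E^\circ g(\mathcal T):=E(g(\mathcal T);|\mathcal T|<\infty)$; for a graph functional $\psi$, $\sigma_\psi^2:=\mathbb E^\circ(|\mathcal T|\psi(\mathcal T)^2)+\frac2\mu(\mathbb E^\circ(e(\mathcal T)\psi(\mathcal T)))^2-\sum_{k\ge0}\frac1{p_k}(\mathbb E^\circ(n_k(\mathcal T)\psi(\mathcal T)))^2$ with $0/0=0$. *)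

theory Defs
  imports "HOL-Analysis.Analysis"
begin

text \<open>Finite rooted ordered (plane) trees; a vertex is a list of its children.\<close>
datatype ptree = Node "ptree list"

definition gf :: "(nat \<Rightarrow> real) \<Rightarrow> real \<Rightarrow> real" where
  "gf p z = (\<Sum>k. p k * z ^ k)"

definition mu :: "(nat \<Rightarrow> real) \<Rightarrow> real" where
  "mu p = (\<Sum>k. real k * p k)"

definition zeta :: "(nat \<Rightarrow> real) \<Rightarrow> real" where
  "zeta p = (THE z. 0 \<le> z \<and> z < 1 \<and> deriv (gf p) z = mu p * z)"

text \<open>Offspring law of non-root vertices: P(hat D - 1 = j) = (j+1) p_(j+1) / mu.\<close>
definition qhat :: "(nat \<Rightarrow> real) \<Rightarrow> nat \<Rightarrow> real" where
  "qhat p j = real (Suc j) * p (Suc j) / mu p"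

text \<open>Probability that the Galton-Watson subtree of a non-root vertex equals t.\<close>
fun gw_sub :: "(nat \<Rightarrow> real) \<Rightarrow> ptree \<Rightarrow> real" where
  "gw_sub p (Node ts) = qhat p (length ts) * prod_list (map (gw_sub p) ts)"

text \<open>Probability that the Galton-Watson tree (root law p, others hat D - 1) equals t.\<close>
fun gw_prob :: "(nat \<Rightarrow> real) \<Rightarrow> ptree \<Rightarrow> real" where
  "gw_prob p (Node ts) = p (length ts) * prod_list (map (gw_sub p) ts)"

text \<open>E\<degree> g(T) = E(g(T); |T| < infinity) = sum over finite trees of P(T = t) g(t).\<close>
definition Efin :: "(nat \<Rightarrow> real) \<Rightarrow> (ptree \<Rightarrow> real) \<Rightarrow> real" where
  "Efin p g = (\<Sum>\<^sub>\<infinity>t\<in>UNIV. gw_prob p t * g t)"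

fun nverts :: "ptree \<Rightarrow> nat" where
  "nverts (Node ts) = Suc (sum_list (map nverts ts))"

definition nedges :: "ptree \<Rightarrow> nat" where
  "nedges t = nverts t - 1"

text \<open>count of non-root vertices of degree k (degree = children + 1)\<close>
fun ndeg_sub :: "nat \<Rightarrow> ptree \<Rightarrow> nat" where
  "ndeg_sub k (Node ts) = (if Suc (length ts) = k then 1 else 0) + sum_list (map (ndeg_sub k) ts)"

text \<open>count of vertices of degree k (root degree = number of children)\<close>
fun ndeg :: "nat \<Rightarrow> ptree \<Rightarrow> nat" where
  "ndeg k (Node ts) = (if length ts = k then 1 else 0) + sum_list (map (ndeg_sub k) ts)"

text \<open>sigma_psi^2 (with 0/0 = 0, as in Isabelle's division).\<close>
definition sigma_sq :: "(nat \<Rightarrow> real) \<Rightarrow> (ptree \<Rightarrow> real) \<Rightarrow> real" where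
  "sigma_sq p psi =
     Efin p (\<lambda>t. real (nverts t) * (psi t)^2)
     + 2 / mu p * (Efin p (\<lambda>t. real (nedges t) * psi t))^2
     - (\<Sum>k. (Efin p (\<lambda>t. real (ndeg k t) * psi t))^2 / p k)"

end

theory Submission
  imports Defs
begin

(* Sum over all finite trees by the degree of the root: if the weights w of the subtrees have
   total W and w g has total V, then the weights r_j (prod w) (b_j + sum g) of the trees have
   total sum_j r_j (b_j W^j + j W^(j-1) V).  For the non-root weights this makes their total W a
   root of f'(z) = mu z in [0,1), and such a root is unique because (mu z - f'(z)) / (1 - z) is
   increasing, so W = zeta.  Summability comes from an induction on the number of vertices
   against some s with f'(s) <= mu s, which exists by supercriticality.  For an additive
   functional the identity becomes the linear equation V = A + (f''(zeta) / mu) V, solvable since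
   f''(zeta) < mu.  This gives E|T|, E e(T) and E n_k(T) = p_k zeta^k (1 + k mu / (mu - f''(zeta))),
   and summing E n_k(T)^2 / p_k over k leaves f, f' and f'' evaluated at zeta^2. *)

section \<open>Summing over finite trees by the degree of the root\<close>

definition node_term ::
  "(nat \<Rightarrow> real) \<Rightarrow> (nat \<Rightarrow> real) \<Rightarrow> (ptree \<Rightarrow> real) \<Rightarrow> (ptree \<Rightarrow> real) \<Rightarrow> ptree \<Rightarrow> real" where
  "node_term r b w g t = (case t of Node ts \<Rightarrow>
     r (length ts) * prod_list (map w ts) * (b (length ts) + sum_list (map g ts)))"

lemma node_term_Node [simp]:
  "node_term r b w g (Node ts) =
     r (length ts) * prod_list (map w ts) * (b (length ts) + sum_list (map g ts))"
  by (simp add: node_term_def)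

definition degree_term :: "(nat \<Rightarrow> real) \<Rightarrow> (nat \<Rightarrow> real) \<Rightarrow> real \<Rightarrow> real \<Rightarrow> nat \<Rightarrow> real" where
  "degree_term r b x y j = r j * (b j * x ^ j + real j * x ^ (j - 1) * y)"

lemma sum_prod_list_lists_length:
  fixes w :: "'a \<Rightarrow> real"
  assumes "finite G"
  shows "(\<Sum>xs | set xs \<subseteq> G \<and> length xs = j. prod_list (map w xs)) = sum w G ^ j"
proof (induction j)
  case 0
  have "{xs. set xs \<subseteq> G \<and> length xs = 0} = {[]}" by auto
  then show ?case by simp
next
  case (Suc j)
  have "(\<Sum>xs | set xs \<subseteq> G \<and> length xs = Suc j. prod_list (map w xs))
      = (\<Sum>(xs, x) \<in> {xs. set xs \<subseteq> G \<and> length xs = j} \<times> G. prod_list (map w xs) * w x)"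
    unfolding lists_length_Suc_eq
    by (subst sum.reindex[OF inj_split_Cons]) (simp add: case_prod_unfold mult.commute)
  also have "\<dots> = (\<Sum>xs | set xs \<subseteq> G \<and> length xs = j. prod_list (map w xs)) * sum w G"
    by (simp add: sum_product sum.cartesian_product)
  finally show ?case using Suc by simp
qed

lemma sum_prod_list_sum_list_lists_length:
  fixes w g :: "'a \<Rightarrow> real"
  assumes "finite G"
  shows "(\<Sum>xs | set xs \<subseteq> G \<and> length xs = j. prod_list (map w xs) * sum_list (map g xs))
       = real j * sum w G ^ (j - 1) * (\<Sum>t\<in>G. w t * g t)"
proof (induction j)
  case 0
  have "{xs. set xs \<subseteq> G \<and> length xs = 0} = {[]}" by auto
  then show ?case by simp
next
  case (Suc j)
  let ?L = "{xs. set xs \<subseteq> G \<and> length xs = j}"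
  have "(\<Sum>xs | set xs \<subseteq> G \<and> length xs = Suc j. prod_list (map w xs) * sum_list (map g xs))
      = (\<Sum>(xs, x) \<in> ?L \<times> G. prod_list (map w xs) * sum_list (map g xs) * w x
                                 + prod_list (map w xs) * (w x * g x))"
    unfolding lists_length_Suc_eq
    by (subst sum.reindex[OF inj_split_Cons]) (simp add: case_prod_unfold algebra_simps)
  also have "\<dots> = (\<Sum>xs\<in>?L. prod_list (map w xs) * sum_list (map g xs)) * sum w G
                 + (\<Sum>xs\<in>?L. prod_list (map w xs)) * (\<Sum>t\<in>G. w t * g t)"
    by (simp add: sum_product sum.cartesian_product case_prod_unfold sum.distrib)
  also have "\<dots> = real (Suc j) * sum w G ^ j * (\<Sum>t\<in>G. w t * g t)"
    using Suc sum_prod_list_lists_length[OF assms, of w j] by (cases j) (simp_all add: algebra_simps)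
  finally show ?case by simp
qed

fun children :: "ptree \<Rightarrow> ptree list" where
  "children (Node ts) = ts"

definition trees_over :: "ptree set \<Rightarrow> nat \<Rightarrow> ptree set" where
  "trees_over G L = {Node ts | ts. set ts \<subseteq> G \<and> length ts < L}"

lemma trees_over_eq_UN: "trees_over G L = Node ` (\<Union>j<L. {ts. set ts \<subseteq> G \<and> length ts = j})"
  unfolding trees_over_def by auto

lemma finite_trees_over: "finite G \<Longrightarrow> finite (trees_over G L)"
  by (simp add: trees_over_eq_UN finite_lists_length_eq)

lemma sum_node_term_trees_over:
  assumes "finite G"
  shows "sum (node_term r b w g) (trees_over G L)
       = (\<Sum>j<L. degree_term r b (sum w G) (\<Sum>t\<in>G. w t * g t) j)"
proof -
  have "sum (node_term r b w g) (trees_over G L)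
      = (\<Sum>ts\<in>(\<Union>j<L. {ts. set ts \<subseteq> G \<and> length ts = j}). node_term r b w g (Node ts))"
    unfolding trees_over_eq_UN by (simp add: sum.reindex inj_on_def)
  also have "\<dots> = (\<Sum>j<L. \<Sum>ts | set ts \<subseteq> G \<and> length ts = j. node_term r b w g (Node ts))"
    by (rule sum.UNION_disjoint) (auto simp: finite_lists_length_eq assms)
  also have "\<dots> = (\<Sum>j<L. \<Sum>ts | set ts \<subseteq> G \<and> length ts = j.
                     r j * (b j * prod_list (map w ts) + prod_list (map w ts) * sum_list (map g ts)))"
    by (intro sum.cong refl) (auto simp: algebra_simps)
  also have "\<dots> = (\<Sum>j<L. degree_term r b (sum w G) (\<Sum>t\<in>G. w t * g t) j)"
    by (simp add: sum.distrib sum_distrib_left[symmetric] sum_prod_list_lists_length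
        sum_prod_list_sum_list_lists_length assms degree_term_def)
  finally show ?thesis .
qed

lemma finite_subset_trees_over:
  assumes "finite F"
  obtains L where "F \<subseteq> trees_over (\<Union>t\<in>F. set (children t)) L"
proof
  show "F \<subseteq> trees_over (\<Union>t\<in>F. set (children t)) (Suc (\<Sum>t\<in>F. length (children t)))"
  proof
    fix t assume t: "t \<in> F"
    obtain ts where ts: "t = Node ts" by (cases t)
    have "length ts \<le> (\<Sum>t\<in>F. length (children t))"
      using member_le_sum[OF t, of "\<lambda>t. length (children t)"] assms ts by simp
    then show "t \<in> trees_over (\<Union>t\<in>F. set (children t)) (Suc (\<Sum>t\<in>F. length (children t)))"
      using t ts unfolding trees_over_def by force
  qed
qed

lemma node_term_nonneg:
  assumes "\<And>j. r j \<ge> 0" "\<And>j. b j \<ge> 0" "\<And>t. w t \<ge> 0" "\<And>t. g t \<ge> 0"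
  shows "node_term r b w g t \<ge> 0"
  using assms
  by (cases t) (auto intro!: mult_nonneg_nonneg add_nonneg_nonneg prod_list_nonneg sum_list_nonneg)

lemma additive_nonneg:
  fixes a :: "nat \<Rightarrow> real"
  assumes "\<And>j. 0 \<le> a j" "\<And>ts. g (Node ts) = a (length ts) + sum_list (map g ts)"
  shows "0 \<le> g t"
proof (induction t)
  case (Node ts)
  then have "0 \<le> sum_list (map g ts)" by (intro sum_list_nonneg) auto
  then show ?case using assms by simp
qed

lemma degree_term_nonneg:
  assumes "\<And>j. r j \<ge> 0" "\<And>j. b j \<ge> 0" "0 \<le> x" "0 \<le> y"
  shows "degree_term r b x y j \<ge> 0"
  unfolding degree_term_def using assms by auto

lemma degree_term_mono:
  assumes "\<And>j. r j \<ge> 0" "\<And>j. b j \<ge> 0" "0 \<le> x" "x \<le> x'" "0 \<le> y" "y \<le> y'"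
  shows "degree_term r b x y j \<le> degree_term r b x' y' j"
  unfolding degree_term_def using assms
  by (intro mult_left_mono add_mono mult_mono power_mono) auto

lemma sum_node_term_le:
  assumes "finite F" and r: "\<And>j. r j \<ge> 0" and b: "\<And>j. b j \<ge> 0"
    and w: "\<And>t. w t \<ge> 0" and g: "\<And>t. g t \<ge> 0"
    and x: "sum w (\<Union>t\<in>F. set (children t)) \<le> x"
    and y: "(\<Sum>t\<in>(\<Union>t\<in>F. set (children t)). w t * g t) \<le> y"
    and z: "\<And>L. (\<Sum>j<L. degree_term r b x y j) \<le> z"
  shows "sum (node_term r b w g) F \<le> z"
proof -
  define C where "C = (\<Union>t\<in>F. set (children t))"
  have "finite C" using assms(1) unfolding C_def by simp
  obtain L where L: "F \<subseteq> trees_over C L"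
    using finite_subset_trees_over[OF assms(1)] unfolding C_def by blast
  have "sum (node_term r b w g) F \<le> sum (node_term r b w g) (trees_over C L)"
    by (rule sum_mono2[OF finite_trees_over[OF \<open>finite C\<close>] L]) (simp add: node_term_nonneg r b w g)
  also have "\<dots> = (\<Sum>j<L. degree_term r b (sum w C) (\<Sum>t\<in>C. w t * g t) j)"
    by (rule sum_node_term_trees_over[OF \<open>finite C\<close>])
  also have "\<dots> \<le> (\<Sum>j<L. degree_term r b x y j)"
    using x y unfolding C_def[symmetric]
    by (intro sum_mono degree_term_mono r b sum_nonneg mult_nonneg_nonneg w g) auto
  also have "\<dots> \<le> z" by (rule z)
  finally show ?thesis .
qed

lemma sum_lessThan_le_sums:
  fixes f :: "nat \<Rightarrow> real"
  assumes "\<And>n. 0 \<le> f n" "f sums S"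
  shows "(\<Sum>n<L. f n) \<le> S"
  using sum_le_suminf[of f "{..<L}"] assms by (auto simp: sums_iff)

lemma degree_terms_le_infsum_node_term:
  assumes summable: "node_term r b w g summable_on UNIV"
    and nonneg: "\<And>t. node_term r b w g t \<ge> 0"
    and hw: "(w has_sum W) UNIV" and hv: "((\<lambda>t. w t * g t) has_sum V) UNIV"
  shows "(\<Sum>j<L. degree_term r b W V j) \<le> infsum (node_term r b w g) UNIV"
proof (rule tendsto_le[OF finite_subsets_at_top_neq_bot tendsto_const])
  have "(sum w \<longlongrightarrow> W) (finite_subsets_at_top UNIV)"
    and "((\<lambda>G. \<Sum>t\<in>G. w t * g t) \<longlongrightarrow> V) (finite_subsets_at_top UNIV)"
    using hw hv by (simp_all add: has_sum_def)
  then show "((\<lambda>G. \<Sum>j<L. degree_term r b (sum w G) (\<Sum>t\<in>G. w t * g t) j)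
               \<longlongrightarrow> (\<Sum>j<L. degree_term r b W V j)) (finite_subsets_at_top UNIV)"
    unfolding degree_term_def by (intro tendsto_intros)
  show "\<forall>\<^sub>F G in finite_subsets_at_top UNIV.
          infsum (node_term r b w g) UNIV \<ge> (\<Sum>j<L. degree_term r b (sum w G) (\<Sum>t\<in>G. w t * g t) j)"
  proof (rule eventually_finite_subsets_at_top_weakI)
    fix G :: "ptree set" assume "finite G"
    then have "(\<Sum>j<L. degree_term r b (sum w G) (\<Sum>t\<in>G. w t * g t) j)
             = sum (node_term r b w g) (trees_over G L)"
      by (simp add: sum_node_term_trees_over)
    also have "\<dots> \<le> infsum (node_term r b w g) UNIV"
      by (rule finite_sum_le_infsum[OF summable]) (auto simp: \<open>finite G\<close> nonneg finite_trees_over)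
    finally show "infsum (node_term r b w g) UNIV
                  \<ge> (\<Sum>j<L. degree_term r b (sum w G) (\<Sum>t\<in>G. w t * g t) j)" .
  qed
qed

lemma node_term_has_sum:
  assumes r: "\<And>j. r j \<ge> 0" and b: "\<And>j. b j \<ge> 0" and w: "\<And>t. w t \<ge> 0" and g: "\<And>t. g t \<ge> 0"
    and hw: "(w has_sum W) UNIV" and hv: "((\<lambda>t. w t * g t) has_sum V) UNIV"
    and hS: "degree_term r b W V sums S"
  shows "(node_term r b w g has_sum S) UNIV"
proof -
  have nonneg: "node_term r b w g t \<ge> 0" for t by (rule node_term_nonneg[OF r b w g])
  have "W \<ge> 0" "V \<ge> 0" using has_sum_nonneg[OF hw] has_sum_nonneg[OF hv] w g by auto
  then have d_nonneg: "degree_term r b W V j \<ge> 0" for j by (simp add: degree_term_nonneg r b)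
  have finite_le: "sum (node_term r b w g) F \<le> S" if "finite F" for F
  proof (rule sum_node_term_le[OF that r b w g])
    show "sum w (\<Union>t\<in>F. set (children t)) \<le> W"
      by (rule finite_sum_le_has_sum[OF hw]) (use that w in auto)
    show "(\<Sum>t\<in>(\<Union>t\<in>F. set (children t)). w t * g t) \<le> V"
      by (rule finite_sum_le_has_sum[OF hv]) (use that w g in auto)
    show "(\<Sum>j<L. degree_term r b W V j) \<le> S" for L
      by (rule sum_lessThan_le_sums[OF d_nonneg hS])
  qed
  have summable: "node_term r b w g summable_on UNIV"
    using nonneg finite_le by (intro nonneg_bdd_above_summable_on bdd_aboveI) auto
  have "infsum (node_term r b w g) UNIV \<le> S"
    by (rule infsum_le_finite_sums[OF summable finite_le])
  moreover have "S \<le> infsum (node_term r b w g) UNIV"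
    unfolding sums_unique[OF hS]
    by (rule suminf_le_const[OF sums_summable[OF hS] degree_terms_le_infsum_node_term[OF summable nonneg hw hv]])
  ultimately show ?thesis using summable by (metis antisym has_sum_infsum)
qed

lemma nverts_child_less: "t \<in> set ts \<Longrightarrow> nverts t < nverts (Node ts)"
  by (simp add: le_imp_less_Suc member_le_sum_list)

lemma finite_sums_le_supersolution:
  assumes q: "\<And>j. q j \<ge> 0" and a: "\<And>j. a j \<ge> 0" and w: "\<And>t. w t \<ge> 0" and g: "\<And>t. g t \<ge> 0"
    and w_rec: "\<And>t. w t = node_term q (\<lambda>_. 1) w (\<lambda>_. 0) t"
    and wg_rec: "\<And>t. w t * g t = node_term q a w g t"
    and s: "s \<ge> 0" and K: "K \<ge> 0"
    and s_super: "\<And>L. (\<Sum>j<L. degree_term q (\<lambda>_. 1) s 0 j) \<le> s"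
    and K_super: "\<And>L. (\<Sum>j<L. degree_term q a s K j) \<le> K"
    and "finite F"
  shows "sum w F \<le> s \<and> (\<Sum>t\<in>F. w t * g t) \<le> K"
proof -
  have "sum w F \<le> s \<and> (\<Sum>t\<in>F. w t * g t) \<le> K" if "finite F" "\<forall>t\<in>F. nverts t < n" for n F
    using that
  proof (induction n arbitrary: F)
    case 0
    then show ?case using s K by simp
  next
    case (Suc n)
    define C where "C = (\<Union>t\<in>F. set (children t))"
    have "nverts c < n" if "c \<in> C" for c
    proof -
      obtain t where t: "t \<in> F" "c \<in> set (children t)" using \<open>c \<in> C\<close> unfolding C_def by blast
      then have "nverts c < nverts t" using nverts_child_less by (cases t) auto
      then show ?thesis using t(1) Suc.prems(2) by auto
    qed
    then have IH: "sum w C \<le> s" "(\<Sum>t\<in>C. w t * g t) \<le> K"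
      using Suc.IH[of C] Suc.prems(1) unfolding C_def by auto
    have "sum w F = sum (node_term q (\<lambda>_. 1) w (\<lambda>_. 0)) F"
      by (rule sum.cong[OF refl w_rec])
    also have "\<dots> \<le> s"
      by (rule sum_node_term_le[where x = s and y = 0])
         (use Suc.prems(1) q w IH s_super in \<open>simp_all add: C_def\<close>)
    finally have "sum w F \<le> s" .
    have "(\<Sum>t\<in>F. w t * g t) = sum (node_term q a w g) F"
      by (rule sum.cong[OF refl wg_rec])
    also have "\<dots> \<le> K"
      by (rule sum_node_term_le[where x = s and y = K])
         (use Suc.prems(1) q a w g IH K_super in \<open>simp_all add: C_def\<close>)
    finally show ?case using \<open>sum w F \<le> s\<close> by simp
  qed
  moreover have "\<forall>t\<in>F. nverts t < Suc (\<Sum>t\<in>F. nverts t)"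
    using member_le_sum[of _ F nverts] \<open>finite F\<close> by (simp add: le_imp_less_Suc)
  ultimately show ?thesis using \<open>finite F\<close> by blast
qed

section \<open>The offspring generating function\<close>

locale offspring_distribution =
  fixes p :: "nat \<Rightarrow> real"
  assumes p_nonneg: "\<And>k. p k \<ge> 0"
    and p_sums_1: "p sums 1"
    and summable_mean: "summable (\<lambda>k. real k * p k)"
    and mu_pos: "mu p > 0"
begin

lemma summable_gf: "\<bar>x\<bar> < 1 \<Longrightarrow> summable (\<lambda>n. p n * x ^ n)"
proof (rule summable_comparison_test'[of p 0])
  show "summable p" using p_sums_1 by (simp add: sums_iff)
  fix n assume "\<bar>x\<bar> < 1"
  then have "\<bar>x\<bar> ^ n \<le> 1" by (simp add: power_le_one)
  then show "norm (p n * x ^ n) \<le> p n"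
    using p_nonneg[of n] by (simp add: abs_mult power_abs mult_left_le)
qed

lemma gf_sums: "\<bar>x\<bar> < 1 \<Longrightarrow> (\<lambda>n. p n * x ^ n) sums gf p x"
  unfolding gf_def by (rule summable_sums[OF summable_gf])

lemma summable_diffs_gf: "\<bar>x\<bar> < 1 \<Longrightarrow> summable (\<lambda>n. diffs p n * x ^ n)"
  by (rule termdiff_converges[of x 1]) (auto intro: summable_gf)

lemma summable_diffs2_gf: "\<bar>x\<bar> < 1 \<Longrightarrow> summable (\<lambda>n. diffs (diffs p) n * x ^ n)"
  by (rule termdiff_converges[of x 1]) (auto intro: summable_diffs_gf)

lemma deriv_gf_eq: "\<bar>x\<bar> < 1 \<Longrightarrow> deriv (gf p) x = (\<Sum>n. diffs p n * x ^ n)"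
  unfolding gf_def
  by (rule DERIV_imp_deriv, rule termdiffs_strong'[of 1]) (auto intro: summable_gf)

lemma deriv2_gf_eq: "\<bar>x\<bar> < 1 \<Longrightarrow> deriv (deriv (gf p)) x = (\<Sum>n. diffs (diffs p) n * x ^ n)"
proof -
  assume x: "\<bar>x\<bar> < 1"
  have "open {y::real. \<bar>y\<bar> < 1}" by (intro open_Collect_less continuous_intros)
  then have "eventually (\<lambda>y. \<bar>y\<bar> < 1) (nhds x)"
    using eventually_nhds_in_open x by fastforce
  then have "eventually (\<lambda>y. deriv (gf p) y = (\<Sum>n. diffs p n * y ^ n)) (nhds x)"
    by eventually_elim (rule deriv_gf_eq)
  then have "deriv (deriv (gf p)) x = deriv (\<lambda>y. \<Sum>n. diffs p n * y ^ n) x"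
    by (rule deriv_cong_ev) simp
  also have "\<dots> = (\<Sum>n. diffs (diffs p) n * x ^ n)"
    by (rule DERIV_imp_deriv, rule termdiffs_strong'[of 1]) (use x in \<open>auto intro: summable_diffs_gf\<close>)
  finally show ?thesis .
qed

lemma deriv_gf_sums: "\<bar>x\<bar> < 1 \<Longrightarrow> (\<lambda>k. real k * p k * x ^ (k - 1)) sums deriv (gf p) x"
  using diffs_equiv[OF summable_diffs_gf] by (simp add: deriv_gf_eq)

lemma deriv2_gf_sums:
  assumes "\<bar>x\<bar> < 1"
  shows "(\<lambda>k. real k * (real k - 1) * p k * x ^ (k - 2)) sums deriv (deriv (gf p)) x"
proof -
  have "(\<lambda>n. real n * diffs p n * x ^ (n - 1)) sums deriv (deriv (gf p)) x"
    using diffs_equiv[OF summable_diffs2_gf[OF assms]] assms by (simp add: deriv2_gf_eq)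
  then have "(\<lambda>n. real (Suc n) * (real (Suc n) - 1) * p (Suc n) * x ^ (Suc n - 2))
               sums deriv (deriv (gf p)) x"
    by (rule sums_cong[THEN iffD1, rotated]) (simp add: diffs_def algebra_simps)
  then show ?thesis by (subst (asm) sums_Suc_iff) simp
qed

lemma mu_sums: "(\<lambda>k. real k * p k) sums mu p"
  unfolding mu_def using summable_mean by (simp add: summable_sums)

lemma mult_k_gf_sums: "\<bar>x\<bar> < 1 \<Longrightarrow> (\<lambda>k. real k * p k * x ^ k) sums (x * deriv (gf p) x)"
proof -
  assume x: "\<bar>x\<bar> < 1"
  have "(\<lambda>k. x * (real k * p k * x ^ (k - 1))) sums (x * deriv (gf p) x)"
    by (rule sums_mult[OF deriv_gf_sums[OF x]])
  then show ?thesis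
    by (rule sums_cong[THEN iffD1, rotated]) (case_tac n, auto)
qed

lemma mult_k2_gf_sums:
  assumes "\<bar>x\<bar> < 1"
  shows "(\<lambda>k. real k * real k * p k * x ^ k)
           sums (x ^ 2 * deriv (deriv (gf p)) x + x * deriv (gf p) x)"
proof -
  have "(\<lambda>k. x ^ 2 * (real k * (real k - 1) * p k * x ^ (k - 2)) + real k * p k * x ^ k)
          sums (x ^ 2 * deriv (deriv (gf p)) x + x * deriv (gf p) x)"
    by (rule sums_add[OF sums_mult[OF deriv2_gf_sums[OF assms]] mult_k_gf_sums[OF assms]])
  then show ?thesis
  proof (rule sums_cong[THEN iffD1, rotated])
    fix k
    show "x ^ 2 * (real k * (real k - 1) * p k * x ^ (k - 2)) + real k * p k * x ^ k
          = real k * real k * p k * x ^ k"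
    proof (cases "k \<ge> 2")
      case True
      then obtain m where "k = m + 2" by (metis le_add_diff_inverse2)
      then show ?thesis by (simp add: algebra_simps power_add power2_eq_square)
    next
      case False
      then have "k = 0 \<or> k = 1" by auto
      then show ?thesis by auto
    qed
  qed
qed

lemma qhat_nonneg: "qhat p j \<ge> 0"
  using p_nonneg[of "Suc j"] mu_pos by (simp add: qhat_def)

lemma qhat_sums: "\<bar>x\<bar> < 1 \<Longrightarrow> (\<lambda>j. qhat p j * x ^ j) sums (deriv (gf p) x / mu p)"
proof -
  assume x: "\<bar>x\<bar> < 1"
  have "(\<lambda>k. real k * p k * x ^ (k - 1) / mu p) sums (deriv (gf p) x / mu p)"
    by (rule sums_divide[OF deriv_gf_sums[OF x]])
  then have "(\<lambda>j. real (Suc j) * p (Suc j) * x ^ (Suc j - 1) / mu p) sums (deriv (gf p) x / mu p)"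
    by (subst sums_Suc_iff) simp
  then show ?thesis by (simp add: qhat_def)
qed

lemma qhat_deriv_sums:
  "\<bar>x\<bar> < 1 \<Longrightarrow> (\<lambda>j. real j * qhat p j * x ^ (j - 1)) sums (deriv (deriv (gf p)) x / mu p)"
proof -
  assume x: "\<bar>x\<bar> < 1"
  have "(\<lambda>k. real k * (real k - 1) * p k * x ^ (k - 2) / mu p) sums (deriv (deriv (gf p)) x / mu p)"
    by (rule sums_divide[OF deriv2_gf_sums[OF x]])
  then have "(\<lambda>j. real (Suc j) * (real (Suc j) - 1) * p (Suc j) * x ^ (Suc j - 2) / mu p)
               sums (deriv (deriv (gf p)) x / mu p)"
    by (subst sums_Suc_iff) simp
  moreover have "Suc j - 2 = j - 1" for j by simp
  ultimately show ?thesis by (simp add: qhat_def algebra_simps)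
qed

lemma degree_term_qhat_sums:
  assumes "\<bar>x\<bar> < 1" "(\<lambda>j. qhat p j * a j * x ^ j) sums A"
  shows "degree_term (qhat p) a x y sums (A + deriv (deriv (gf p)) x / mu p * y)"
proof -
  have "(\<lambda>j. qhat p j * a j * x ^ j + real j * qhat p j * x ^ (j - 1) * y)
          sums (A + deriv (deriv (gf p)) x / mu p * y)"
    by (rule sums_add[OF assms(2) sums_mult2[OF qhat_deriv_sums[OF assms(1)]]])
  then show ?thesis unfolding degree_term_def by (simp add: algebra_simps)
qed

lemma gw_sub_nonneg: "gw_sub p t \<ge> 0"
proof (induction t)
  case (Node ts)
  then show ?case by (auto simp: qhat_nonneg intro!: mult_nonneg_nonneg prod_list_nonneg)
qed

lemma gw_sub_eq_node_term: "gw_sub p t = node_term (qhat p) (\<lambda>_. 1) (gw_sub p) (\<lambda>_. 0) t"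
  by (cases t) simp

lemma gw_sub_mult_eq_node_term:
  assumes "\<And>ts. g (Node ts) = a (length ts) + sum_list (map g ts)"
  shows "gw_sub p t * g t = node_term (qhat p) a (gw_sub p) g t"
  by (cases t) (simp add: assms)

lemma gw_sub_has_sum_fixed_point:
  assumes s: "0 \<le> s" "s < 1" "deriv (gf p) s \<le> mu p * s"
  obtains W where "(gw_sub p has_sum W) UNIV" "0 \<le> W" "W \<le> s" "deriv (gf p) W = mu p * W"
proof -
  have d_sums: "degree_term (qhat p) (\<lambda>_. 1) x 0 sums (deriv (gf p) x / mu p)" if "\<bar>x\<bar> < 1" for x
    using degree_term_qhat_sums[of x "\<lambda>_. 1" "deriv (gf p) x / mu p" 0] qhat_sums[OF that] that
    by simp
  have super: "(\<Sum>j<L. degree_term (qhat p) (\<lambda>_. 1) s 0 j) \<le> s" for L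
  proof -
    have "(\<Sum>j<L. degree_term (qhat p) (\<lambda>_. 1) s 0 j) \<le> deriv (gf p) s / mu p"
      using s by (intro sum_lessThan_le_sums[OF _ d_sums]) (auto intro: degree_term_nonneg qhat_nonneg)
    also have "\<dots> \<le> s" using s mu_pos by (simp add: divide_le_eq mult.commute)
    finally show ?thesis .
  qed
  have "gw_sub p t * 0 = node_term (qhat p) (\<lambda>_. 0) (gw_sub p) (\<lambda>_. 0) t" for t
    by (cases t) simp
  then have bound: "sum (gw_sub p) F \<le> s" if "finite F" for F
    using finite_sums_le_supersolution[of "qhat p" "\<lambda>_. 0" "gw_sub p" "\<lambda>_. 0" s 0 F]
      qhat_nonneg gw_sub_nonneg gw_sub_eq_node_term s super that
    by (simp add: degree_term_def)
  have summable: "gw_sub p summable_on UNIV"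
    using gw_sub_nonneg bound by (intro nonneg_bdd_above_summable_on bdd_aboveI) auto
  define W where "W = infsum (gw_sub p) UNIV"
  have hW: "(gw_sub p has_sum W) UNIV" using summable unfolding W_def by simp
  have "W \<le> s" unfolding W_def by (rule infsum_le_finite_sums[OF summable bound])
  moreover have "0 \<le> W" unfolding W_def by (rule infsum_nonneg) (simp add: gw_sub_nonneg)
  ultimately have W_abs: "\<bar>W\<bar> < 1" using s by simp
  have "(node_term (qhat p) (\<lambda>_. 1) (gw_sub p) (\<lambda>_. 0) has_sum (deriv (gf p) W / mu p)) UNIV"
    by (rule node_term_has_sum[OF qhat_nonneg _ gw_sub_nonneg _ hW _ d_sums[OF W_abs]]) simp_all
  moreover have "node_term (qhat p) (\<lambda>_. 1) (gw_sub p) (\<lambda>_. 0) = gw_sub p"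
    using gw_sub_eq_node_term by auto
  ultimately have "W = deriv (gf p) W / mu p" using hW has_sum_unique by metis
  then have "deriv (gf p) W = mu p * W" using mu_pos by (simp add: field_simps)
  then show thesis using that hW \<open>0 \<le> W\<close> \<open>W \<le> s\<close> by blast
qed

end

section \<open>Supercritical offspring laws\<close>

text \<open>\<open>pow_quot k x\<close> is the polynomial \<open>(x - x ^ (k - 1)) / (1 - x)\<close>.  Dividing
  \<open>\<mu> x - f'(x) = (\<Sum>k. k p\<^sub>k (x - x ^ (k - 1)))\<close> by \<open>1 - x\<close> gives a series whose
  terms are nondecreasing in \<open>x \<ge> 0\<close>, strictly for \<open>k \<ge> 3\<close>.\<close>

definition pow_quot :: "nat \<Rightarrow> real \<Rightarrow> real" where
  "pow_quot k x = (if k = 1 then -1 else (\<Sum>i=1..k-2. x ^ i))"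

lemma one_minus_mult_pow_quot:
  assumes "1 \<le> k"
  shows "(1 - x) * pow_quot k x = x - x ^ (k - 1)"
proof -
  consider "k = 1" | "k = 2" | "3 \<le> k" using assms by linarith
  then show ?thesis
  proof cases
    case 3
    then have "k - 1 = Suc (k - 2)" by simp
    then show ?thesis using 3 sum_gp_multiplied[of 1 "k - 2" x] by (simp add: pow_quot_def)
  qed (simp_all add: pow_quot_def)
qed

lemma pow_quot_diff_ge:
  assumes "3 \<le> k" "0 \<le> a" "a \<le> b"
  shows "b - a \<le> pow_quot k b - pow_quot k a"
proof -
  have "b ^ 1 - a ^ 1 \<le> (\<Sum>i=1..k-2. b ^ i - a ^ i)"
    by (rule member_le_sum) (use assms in \<open>auto intro: power_mono\<close>)
  then show ?thesis using assms by (simp add: pow_quot_def sum_subtractf)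
qed

lemma pow_quot_mono:
  assumes "1 \<le> k" "0 \<le> a" "a \<le> b"
  shows "pow_quot k a \<le> pow_quot k b"
proof -
  consider "k = 1" | "k = 2" | "3 \<le> k" using assms by linarith
  then show ?thesis
  proof cases
    case 3
    then show ?thesis using pow_quot_diff_ge[OF 3 assms(2,3)] assms by simp
  qed (simp_all add: pow_quot_def)
qed

lemma pow_quot_nonneg: "2 \<le> k \<Longrightarrow> 0 \<le> x \<Longrightarrow> 0 \<le> pow_quot k x"
  unfolding pow_quot_def by (auto intro: sum_nonneg)

lemma pow_quot_at_1: "1 \<le> k \<Longrightarrow> pow_quot k 1 = real k - 2"
  unfolding pow_quot_def by (cases "k = 1") (auto simp: of_nat_diff)

lemma isCont_pow_quot: "isCont (pow_quot k) x"
  unfolding pow_quot_def by (cases "k = 1") (auto intro!: continuous_intros)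

lemma one_minus_sq_le:
  fixes z :: real
  assumes "1 \<le> m" "0 \<le> z"
  shows "(1 - z) ^ 2 \<le> 1 - (real m + 1) * z ^ m + real m * z ^ Suc m"
  using assms(1)
proof (induction m rule: dec_induct)
  case base
  then show ?case by (simp add: power2_eq_square algebra_simps)
next
  case (step m)
  have "1 - (real (Suc m) + 1) * z ^ Suc m + real (Suc m) * z ^ Suc (Suc m)
      = (1 - (real m + 1) * z ^ m + real m * z ^ Suc m) + (real m + 1) * z ^ m * (1 - z) ^ 2"
    by (simp add: power2_eq_square algebra_simps)
  moreover have "0 \<le> (real m + 1) * z ^ m * (1 - z) ^ 2" using assms(2) by simp
  ultimately show ?case using step.IH by linarith
qed

lemma one_minus_sq_le_deriv2_term:
  fixes z :: real
  assumes "3 \<le> k" "0 \<le> z"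
  shows "(1 - z) ^ 2 \<le> (1 - z) * (1 - (real k - 1) * z ^ (k - 2)) + (z - z ^ (k - 1))"
proof -
  define m where "m = k - 2"
  have m: "k = m + 2" "1 \<le> m" using assms(1) unfolding m_def by simp_all
  have "(1 - z) * (1 - (real k - 1) * z ^ (k - 2)) + (z - z ^ (k - 1))
      = 1 - (real m + 1) * z ^ m + real m * z ^ Suc m"
    unfolding m by (simp add: algebra_simps)
  then show ?thesis using one_minus_sq_le[OF m(2) assms(2)] by simp
qed

context offspring_distribution
begin

lemma pow_quot_sums:
  assumes "0 \<le> x" "x < 1"
  shows "(\<lambda>k. real k * p k * pow_quot k x) sums ((mu p * x - deriv (gf p) x) / (1 - x))"
proof -
  have "(\<lambda>k. real k * p k * x - real k * p k * x ^ (k - 1)) sums (mu p * x - deriv (gf p) x)"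
    using assms by (intro sums_diff sums_mult2 mu_sums deriv_gf_sums) simp
  then have "(\<lambda>k. (1 - x) * (real k * p k * pow_quot k x)) sums (mu p * x - deriv (gf p) x)"
  proof (rule sums_cong[THEN iffD1, rotated])
    fix k
    show "real k * p k * x - real k * p k * x ^ (k - 1) = (1 - x) * (real k * p k * pow_quot k x)"
    proof (cases "k = 0")
      case False
      then have "(1 - x) * pow_quot k x = x - x ^ (k - 1)" by (simp add: one_minus_mult_pow_quot)
      then show ?thesis by (metis mult.left_commute right_diff_distrib)
    qed simp
  qed
  then have "(\<lambda>k. (1 - x) * (real k * p k * pow_quot k x) / (1 - x))
               sums ((mu p * x - deriv (gf p) x) / (1 - x))"
    by (rule sums_divide)
  then show ?thesis using assms by simp
qed

end

locale supercritical_offspring = offspring_distribution +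
  assumes supercritical: "\<not> summable (\<lambda>k. real k * (real k - 2) * p k)
                          \<or> (\<Sum>k. real k * (real k - 2) * p k) > 0"
begin

lemma ex_large_degree: "\<exists>k\<ge>3. p k > 0"
proof (rule ccontr)
  assume "\<not> ?thesis"
  then have "p k = 0" if "k \<ge> 3" for k using p_nonneg that by (meson le_less not_le)
  then have "(\<lambda>k. real k * (real k - 2) * p k) = (\<lambda>k. if k = 1 then - p 1 else 0)"
    by (intro ext) (case_tac "k \<ge> 3", auto simp: numeral_3_eq_3 less_Suc_eq)
  then have "(\<lambda>k. real k * (real k - 2) * p k) sums (- p 1)"
    using sums_single[of 1 "\<lambda>_. - p 1"] by simp
  then show False using supercritical p_nonneg[of 1] by (auto simp: sums_iff)
qed

lemma pow_quot_series_strict_mono: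
  assumes "0 \<le> x" "x < y" "y < 1"
  shows "(mu p * x - deriv (gf p) x) / (1 - x) < (mu p * y - deriv (gf p) y) / (1 - y)"
proof -
  have diff_sums: "(\<lambda>k. real k * p k * (pow_quot k y - pow_quot k x))
      sums ((mu p * y - deriv (gf p) y) / (1 - y) - (mu p * x - deriv (gf p) x) / (1 - x))"
    using sums_diff[OF pow_quot_sums pow_quot_sums] assms by (simp add: algebra_simps)
  have "0 \<le> real k * p k * (pow_quot k y - pow_quot k x)" for k
    using pow_quot_mono[of k x y] p_nonneg[of k] assms by (cases "k = 0") simp_all
  moreover obtain k where k: "k \<ge> 3" "p k > 0" using ex_large_degree by blast
  moreover have "0 < real k * p k * (pow_quot k y - pow_quot k x)"
    using pow_quot_diff_ge[OF k(1), of x y] assms k by simp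
  ultimately have "0 < (\<Sum>k. real k * p k * (pow_quot k y - pow_quot k x))"
    by (intro suminf_pos2[OF sums_summable[OF diff_sums]])
  then show ?thesis using diff_sums by (simp add: sums_iff)
qed

lemma deriv_gf_eq_mu_unique:
  assumes "0 \<le> x" "x < 1" "deriv (gf p) x = mu p * x"
    and "0 \<le> y" "y < 1" "deriv (gf p) y = mu p * y"
  shows "x = y"
  using pow_quot_series_strict_mono[of x y] pow_quot_series_strict_mono[of y x] assms
  by (cases x y rule: linorder_cases) auto

lemma ex_partial_sum_pos: "\<exists>N. 0 < (\<Sum>k<N. real k * (real k - 2) * p k)"
proof -
  define a where "a k = real k * (real k - 2) * p k" for k
  show ?thesis
  proof (cases "summable a")
    case True
    then have "suminf a > 0" using supercritical unfolding a_def by auto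
    with summable_LIMSEQ[OF True] obtain N where "0 < (\<Sum>k<N. a k)"
      by (metis eventually_sequentially order.refl order_tendstoD(1))
    then show ?thesis unfolding a_def by blast
  next
    case False
    show ?thesis
    proof (rule ccontr)
      assume "\<not> ?thesis"
      then have le: "(\<Sum>k<N. a k) \<le> 0" for N unfolding a_def by (simp add: not_less)
      have "summable (\<lambda>n. a (n + 2))"
      proof (rule bounded_imp_summable)
        show "0 \<le> a (n + 2)" for n unfolding a_def using p_nonneg[of "n + 2"] by simp
        fix n
        have "(\<Sum>k<Suc (Suc (Suc n)). a k) = a 0 + (a 1 + (\<Sum>k<Suc n. a (Suc (Suc k))))"
          by (simp only: sum.lessThan_Suc_shift One_nat_def)
        also have "\<dots> = - p 1 + (\<Sum>k\<le>n. a (k + 2))"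
          unfolding a_def by (simp add: lessThan_Suc_atMost)
        finally show "(\<Sum>k\<le>n. a (k + 2)) \<le> p 1" using le[of "Suc (Suc (Suc n))"] by simp
      qed
      then show False using False summable_iff_shift by blast
    qed
  qed
qed

lemma ex_deriv_gf_less_mu: "\<exists>s. 0 \<le> s \<and> s < 1 \<and> deriv (gf p) s < mu p * s"
proof -
  obtain N where N: "0 < (\<Sum>k<N. real k * (real k - 2) * p k)" using ex_partial_sum_pos by blast
  have "N \<ge> 2"
  proof (rule ccontr)
    assume "\<not> N \<ge> 2"
    then have "N = 0 \<or> N = 1" by auto
    then show False using N by auto
  qed
  define P where "P x = (\<Sum>k<N. real k * p k * pow_quot k x)" for x
  have "P 1 = (\<Sum>k<N. real k * (real k - 2) * p k)"
    unfolding P_def by (intro sum.cong refl) (case_tac "x = 0", auto simp: pow_quot_at_1)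
  moreover have "isCont P 1" unfolding P_def by (intro continuous_intros isCont_pow_quot)
  ultimately have "eventually (\<lambda>x. 0 < P x) (at_left (1::real))"
    using N by (intro order_tendstoD(1)) (auto simp: isCont_def filterlim_at_split)
  moreover have "eventually (\<lambda>x. x \<in> {0<..<1}) (at_left (1::real))"
    by (rule eventually_at_left_real) simp
  ultimately obtain s where s: "0 < P s" "0 < s" "s < 1"
    using eventually_happens[OF eventually_conj] by (fastforce simp: trivial_limit_at_left_real)
  have sums: "(\<lambda>k. real k * p k * pow_quot k s) sums ((mu p * s - deriv (gf p) s) / (1 - s))"
    using pow_quot_sums s by simp
  have "P s \<le> (mu p * s - deriv (gf p) s) / (1 - s)"
    unfolding P_def using \<open>N \<ge> 2\<close> p_nonneg s sums
    by (intro sum_le_suminf[OF sums_summable[OF sums], THEN order_trans])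
       (auto intro!: mult_nonneg_nonneg pow_quot_nonneg simp: sums_iff)
  then have "0 < (mu p * s - deriv (gf p) s) / (1 - s)" using s by linarith
  then show ?thesis using s by (intro exI[of _ s]) (simp add: zero_less_divide_iff)
qed

lemma deriv2_gf_less_mu:
  assumes z: "0 \<le> z" "z < 1" and root: "deriv (gf p) z = mu p * z"
  shows "deriv (deriv (gf p)) z < mu p"
proof -
  \<comment> \<open>At a root, \<open>(1 - z) (\<mu> - f''(z)) = (\<Sum>k. k p\<^sub>k E k)\<close>; the terms with \<open>k \<le> 2\<close>
    vanish and the others are at least \<open>k p\<^sub>k (1 - z)\<^sup>2\<close>.\<close>
  define E where "E k = (1 - z) * (1 - (real k - 1) * z ^ (k - 2)) + (z - z ^ (k - 1))" for k
  have "(\<lambda>k. real k * p k - real k * (real k - 1) * p k * z ^ (k - 2))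
          sums (mu p - deriv (deriv (gf p)) z)"
    using z by (intro sums_diff mu_sums deriv2_gf_sums) simp
  moreover have "(\<lambda>k. real k * p k * z - real k * p k * z ^ (k - 1)) sums 0"
    using sums_diff[OF sums_mult2[OF mu_sums] deriv_gf_sums, of z z] z root by simp
  ultimately have "(\<lambda>k. (1 - z) * (real k * p k - real k * (real k - 1) * p k * z ^ (k - 2))
                       + (real k * p k * z - real k * p k * z ^ (k - 1)))
                     sums ((1 - z) * (mu p - deriv (deriv (gf p)) z) + 0)"
    by (intro sums_add sums_mult)
  then have E_sums: "(\<lambda>k. real k * p k * E k) sums ((1 - z) * (mu p - deriv (deriv (gf p)) z))"
    unfolding add_0_right by (rule sums_cong[THEN iffD1, rotated]) (simp add: E_def algebra_simps)
  have E_ge: "(1 - z) ^ 2 \<le> E k" if "k \<ge> 3" for k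
    unfolding E_def by (rule one_minus_sq_le_deriv2_term[OF that z(1)])
  have "0 \<le> real k * p k * E k" for k
  proof (cases "k \<ge> 3")
    case True
    then show ?thesis using E_ge[OF True] p_nonneg[of k] by (simp add: order_trans[OF zero_le_power2])
  next
    case False
    then have "k = 0 \<or> k = 1 \<or> k = 2" by auto
    then show ?thesis by (auto simp: E_def)
  qed
  moreover obtain k where k: "k \<ge> 3" "p k > 0" using ex_large_degree by blast
  moreover have "0 < real k * p k * E k"
    using E_ge[OF k(1)] k z by (simp add: order_less_le_trans[of 0 "(1 - z)\<^sup>2"])
  ultimately have "0 < (\<Sum>k. real k * p k * E k)" by (intro suminf_pos2[OF sums_summable[OF E_sums]])
  then have "0 < (1 - z) * (mu p - deriv (deriv (gf p)) z)" using E_sums by (simp add: sums_iff)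
  then show ?thesis using z by (simp add: zero_less_mult_iff)
qed

end

section \<open>Expectations over the finite Galton--Watson trees\<close>

lemma of_nat_sum_list_map: "of_nat (sum_list (map f xs)) = sum_list (map (\<lambda>x. of_nat (f x)) xs)"
  by (induction xs) simp_all

context supercritical_offspring
begin

lemma
  shows gw_sub_has_sum_zeta: "(gw_sub p has_sum zeta p) UNIV"
    and zeta_nonneg: "0 \<le> zeta p"
    and zeta_less_1: "zeta p < 1"
    and deriv_gf_zeta: "deriv (gf p) (zeta p) = mu p * zeta p"
proof -
  obtain s where s: "0 \<le> s" "s < 1" "deriv (gf p) s < mu p * s"
    using ex_deriv_gf_less_mu by blast
  then have "deriv (gf p) s \<le> mu p * s" by simp
  then obtain W where W: "(gw_sub p has_sum W) UNIV" "0 \<le> W" "W \<le> s" "deriv (gf p) W = mu p * W"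
    using gw_sub_has_sum_fixed_point[OF s(1,2)] by blast
  have "zeta p = W"
    unfolding zeta_def
  proof (rule the_equality)
    show "0 \<le> W \<and> W < 1 \<and> deriv (gf p) W = mu p * W" using W s by simp
    fix z assume "0 \<le> z \<and> z < 1 \<and> deriv (gf p) z = mu p * z"
    then show "z = W" using deriv_gf_eq_mu_unique[of z W] W s by simp
  qed
  then show "(gw_sub p has_sum zeta p) UNIV" "0 \<le> zeta p" "zeta p < 1"
    "deriv (gf p) (zeta p) = mu p * zeta p"
    using W s by simp_all
qed

lemma abs_zeta_less_1: "\<bar>zeta p\<bar> < 1"
  using zeta_nonneg zeta_less_1 by simp

lemma deriv2_gf_zeta_less_mu: "deriv (deriv (gf p)) (zeta p) < mu p"
  using deriv2_gf_less_mu zeta_nonneg zeta_less_1 deriv_gf_zeta by blast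

lemma qhat_zeta_sums: "(\<lambda>j. qhat p j * zeta p ^ j) sums zeta p"
  using qhat_sums[OF abs_zeta_less_1] mu_pos by (simp add: deriv_gf_zeta)

lemma gw_sub_additive_summable:
  assumes a: "\<And>j. 0 \<le> a j"
    and g_Node: "\<And>ts. g (Node ts) = a (length ts) + sum_list (map g ts)"
    and A: "(\<lambda>j. qhat p j * a j * zeta p ^ j) sums A"
  shows "(\<lambda>t. gw_sub p t * g t) summable_on UNIV"
proof -
  define z c where "z = zeta p" and "c = deriv (deriv (gf p)) z / mu p"
  have z: "0 \<le> z" "\<bar>z\<bar> < 1" using zeta_nonneg abs_zeta_less_1 unfolding z_def by auto
  have "c < 1" using deriv2_gf_zeta_less_mu mu_pos unfolding c_def z_def by (simp add: divide_less_eq)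
  have g: "0 \<le> g t" for t by (rule additive_nonneg[OF a g_Node])
  have "0 \<le> A" using sums_le[OF _ sums_zero A] a qhat_nonneg zeta_nonneg by simp
  define K where "K = A / (1 - c)"
  have K: "0 \<le> K" "A + c * K = K"
    using \<open>0 \<le> A\<close> \<open>c < 1\<close> unfolding K_def by (auto simp: field_simps)
  have "(\<Sum>j<L. degree_term (qhat p) (\<lambda>_. 1) z 0 j) \<le> z" for L
    using degree_term_qhat_sums[of z "\<lambda>_. 1" z 0] qhat_zeta_sums z
    by (intro sum_lessThan_le_sums) (auto simp: z_def intro: degree_term_nonneg qhat_nonneg)
  moreover have "(\<Sum>j<L. degree_term (qhat p) a z K j) \<le> K" for L
    using degree_term_qhat_sums[OF z(2) A[folded z_def], of K] K z unfolding c_def[symmetric]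
    by (intro sum_lessThan_le_sums) (auto intro: degree_term_nonneg qhat_nonneg a)
  ultimately have "(\<Sum>t\<in>F. gw_sub p t * g t) \<le> K" if "finite F" for F
    using finite_sums_le_supersolution[OF qhat_nonneg a gw_sub_nonneg g gw_sub_eq_node_term
        gw_sub_mult_eq_node_term[OF g_Node] z(1) K(1) _ _ that] by blast
  then show ?thesis
    using gw_sub_nonneg g by (intro nonneg_bdd_above_summable_on bdd_aboveI) auto
qed

lemma gw_sub_additive_has_sum:
  assumes a: "\<And>j. 0 \<le> a j"
    and g_Node: "\<And>ts. g (Node ts) = a (length ts) + sum_list (map g ts)"
    and A: "(\<lambda>j. qhat p j * a j * zeta p ^ j) sums A"
  shows "((\<lambda>t. gw_sub p t * g t) has_sum A * mu p / (mu p - deriv (deriv (gf p)) (zeta p))) UNIV"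
proof -
  define c where "c = deriv (deriv (gf p)) (zeta p) / mu p"
  have "c < 1" using deriv2_gf_zeta_less_mu mu_pos unfolding c_def by (simp add: divide_less_eq)
  define V where "V = infsum (\<lambda>t. gw_sub p t * g t) UNIV"
  have hV: "((\<lambda>t. gw_sub p t * g t) has_sum V) UNIV"
    using gw_sub_additive_summable[OF a g_Node A] unfolding V_def by simp
  have "degree_term (qhat p) a (zeta p) V sums (A + c * V)"
    unfolding c_def by (rule degree_term_qhat_sums[OF abs_zeta_less_1 A])
  then have "(node_term (qhat p) a (gw_sub p) g has_sum (A + c * V)) UNIV"
    by (rule node_term_has_sum[OF qhat_nonneg a gw_sub_nonneg additive_nonneg[OF a g_Node]
          gw_sub_has_sum_zeta hV])
  moreover have "node_term (qhat p) a (gw_sub p) g = (\<lambda>t. gw_sub p t * g t)"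
    using gw_sub_mult_eq_node_term[OF g_Node] by auto
  ultimately have "V = A + c * V" using hV has_sum_unique by metis
  then have "V = A * mu p / (mu p - deriv (deriv (gf p)) (zeta p))"
    using \<open>c < 1\<close> mu_pos unfolding c_def by (simp add: field_simps)
  then show ?thesis using hV by simp
qed

lemma gw_prob_additive_has_sum:
  assumes b: "\<And>j. 0 \<le> b j" and g: "\<And>t. 0 \<le> g t"
    and G_Node: "\<And>ts. G (Node ts) = b (length ts) + sum_list (map g ts)"
    and B: "(\<lambda>j. p j * b j * zeta p ^ j) sums B"
    and V: "((\<lambda>t. gw_sub p t * g t) has_sum V) UNIV"
  shows "((\<lambda>t. gw_prob p t * G t) has_sum (B + mu p * zeta p * V)) UNIV"
proof -
  have "(\<lambda>j. p j * b j * zeta p ^ j + real j * p j * zeta p ^ (j - 1) * V)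
          sums (B + deriv (gf p) (zeta p) * V)"
    by (rule sums_add[OF B sums_mult2[OF deriv_gf_sums[OF abs_zeta_less_1]]])
  then have "degree_term p b (zeta p) V sums (B + mu p * zeta p * V)"
    unfolding deriv_gf_zeta
    by (rule sums_cong[THEN iffD1, rotated]) (simp add: degree_term_def algebra_simps)
  then have "(node_term p b (gw_sub p) g has_sum (B + mu p * zeta p * V)) UNIV"
    by (rule node_term_has_sum[OF p_nonneg b gw_sub_nonneg g gw_sub_has_sum_zeta V])
  moreover have "node_term p b (gw_sub p) g = (\<lambda>t. gw_prob p t * G t)"
    by (intro ext, case_tac t) (simp add: G_Node)
  ultimately show ?thesis by simp
qed

lemma Efin_eqI: "((\<lambda>t. gw_prob p t * g t) has_sum x) UNIV \<Longrightarrow> Efin p g = x"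
  unfolding Efin_def by (rule infsumI)

lemma gw_sub_nverts_has_sum:
  "((\<lambda>t. gw_sub p t * real (nverts t)) has_sum
      zeta p * mu p / (mu p - deriv (deriv (gf p)) (zeta p))) UNIV"
  by (rule gw_sub_additive_has_sum[of "\<lambda>_. 1" "\<lambda>t. real (nverts t)" "zeta p"])
     (simp_all add: of_nat_sum_list_map qhat_zeta_sums)

lemma gw_sub_ndeg_sub_has_sum:
  "((\<lambda>t. gw_sub p t * real (ndeg_sub k t)) has_sum
      real k * p k * zeta p ^ (k - 1) / (mu p - deriv (deriv (gf p)) (zeta p))) UNIV"
proof -
  define A where "A = real k * p k * zeta p ^ (k - 1) / mu p"
  have "(\<lambda>j. qhat p j * (if Suc j = k then 1 else 0) * zeta p ^ j) sums A"
  proof (cases k)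
    case 0
    then show ?thesis by (simp add: A_def)
  next
    case (Suc i)
    have "(\<lambda>j. if j = i then qhat p i * zeta p ^ i else 0) sums A"
      using sums_single[of i "\<lambda>_. qhat p i * zeta p ^ i"] Suc by (simp add: A_def qhat_def)
    moreover have "(\<lambda>j. qhat p j * (if Suc j = k then 1 else 0) * zeta p ^ j)
                 = (\<lambda>j. if j = i then qhat p i * zeta p ^ i else 0)"
      using Suc by auto
    ultimately show ?thesis by simp
  qed
  then have "((\<lambda>t. gw_sub p t * real (ndeg_sub k t)) has_sum
               A * mu p / (mu p - deriv (deriv (gf p)) (zeta p))) UNIV"
    by (intro gw_sub_additive_has_sum[of "\<lambda>j. if Suc j = k then 1 else 0"])
       (simp_all add: of_nat_sum_list_map)
  then show ?thesis using mu_pos by (simp add: A_def)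
qed

lemma Efin_nverts:
  "Efin p (\<lambda>t. real (nverts t)) =
     gf p (zeta p) + mu p ^ 2 * zeta p ^ 2 / (mu p - deriv (deriv (gf p)) (zeta p))"
proof -
  have "((\<lambda>t. gw_prob p t * real (nverts t)) has_sum
          gf p (zeta p) + mu p * zeta p *
            (zeta p * mu p / (mu p - deriv (deriv (gf p)) (zeta p)))) UNIV"
    using gf_sums[OF abs_zeta_less_1]
    by (intro gw_prob_additive_has_sum[of "\<lambda>_. 1" "\<lambda>t. real (nverts t)"] gw_sub_nverts_has_sum)
       (simp_all add: of_nat_sum_list_map)
  then show ?thesis by (rule Efin_eqI[THEN trans]) (simp add: power2_eq_square)
qed

lemma Efin_nedges:
  "Efin p (\<lambda>t. real (nedges t)) = mu p ^ 2 * zeta p ^ 2 / (mu p - deriv (deriv (gf p)) (zeta p))"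
proof -
  have "((\<lambda>t. gw_prob p t * real (nedges t)) has_sum
          0 + mu p * zeta p * (zeta p * mu p / (mu p - deriv (deriv (gf p)) (zeta p)))) UNIV"
    by (intro gw_prob_additive_has_sum[of "\<lambda>_. 0" "\<lambda>t. real (nverts t)"] gw_sub_nverts_has_sum)
       (simp_all add: of_nat_sum_list_map nedges_def)
  then show ?thesis by (rule Efin_eqI[THEN trans]) (simp add: power2_eq_square)
qed

lemma Efin_ndeg:
  "Efin p (\<lambda>t. real (ndeg k t)) =
     p k * zeta p ^ k * (1 + real k * mu p / (mu p - deriv (deriv (gf p)) (zeta p)))"
proof -
  have "(\<lambda>j. p j * (if j = k then 1 else 0) * zeta p ^ j) = (\<lambda>j. if j = k then p k * zeta p ^ k else 0)"
    by auto
  then have "(\<lambda>j. p j * (if j = k then 1 else 0) * zeta p ^ j) sums (p k * zeta p ^ k)"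
    using sums_single[of k "\<lambda>_. p k * zeta p ^ k"] by simp
  then have "((\<lambda>t. gw_prob p t * real (ndeg k t)) has_sum
          p k * zeta p ^ k + mu p * zeta p *
            (real k * p k * zeta p ^ (k - 1) / (mu p - deriv (deriv (gf p)) (zeta p)))) UNIV"
    by (intro gw_prob_additive_has_sum[of "\<lambda>j. if j = k then 1 else 0" "\<lambda>t. real (ndeg_sub k t)"]
        gw_sub_ndeg_sub_has_sum) (simp_all add: of_nat_sum_list_map)
  then have "Efin p (\<lambda>t. real (ndeg k t)) = p k * zeta p ^ k + mu p * zeta p *
              (real k * p k * zeta p ^ (k - 1) / (mu p - deriv (deriv (gf p)) (zeta p)))"
    by (rule Efin_eqI)
  also have "\<dots> = p k * zeta p ^ k * (1 + real k * mu p / (mu p - deriv (deriv (gf p)) (zeta p)))"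
    by (cases k) (simp_all add: algebra_simps)
  finally show ?thesis .
qed

lemma Efin_ndeg_sq_sums:
  defines "C \<equiv> mu p / (mu p - deriv (deriv (gf p)) (zeta p))"
  shows "(\<lambda>k. Efin p (\<lambda>t. real (ndeg k t)) ^ 2 / p k) sums
           (gf p (zeta p ^ 2) + 2 * C * (zeta p ^ 2 * deriv (gf p) (zeta p ^ 2))
            + C ^ 2 * (zeta p ^ 4 * deriv (deriv (gf p)) (zeta p ^ 2)
                       + zeta p ^ 2 * deriv (gf p) (zeta p ^ 2)))"
proof -
  have z2: "\<bar>zeta p ^ 2\<bar> < 1" using abs_zeta_less_1 by (simp add: abs_square_less_1)
  have z4: "(zeta p ^ 2) ^ 2 = zeta p ^ 4" by simp
  have "(\<lambda>k. p k * (zeta p ^ 2) ^ k + 2 * C * (real k * p k * (zeta p ^ 2) ^ k)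
             + C ^ 2 * (real k * real k * p k * (zeta p ^ 2) ^ k))
          sums (gf p (zeta p ^ 2) + 2 * C * (zeta p ^ 2 * deriv (gf p) (zeta p ^ 2))
                + C ^ 2 * ((zeta p ^ 2) ^ 2 * deriv (deriv (gf p)) (zeta p ^ 2)
                           + zeta p ^ 2 * deriv (gf p) (zeta p ^ 2)))"
    by (intro sums_add sums_mult gf_sums mult_k_gf_sums mult_k2_gf_sums z2)
  then show ?thesis
    unfolding z4
  proof (rule sums_cong[THEN iffD1, rotated])
    fix k
    have "Efin p (\<lambda>t. real (ndeg k t)) = p k * zeta p ^ k * (1 + real k * C)"
      unfolding Efin_ndeg C_def by simp
    moreover have "(zeta p ^ 2) ^ k = zeta p ^ k * zeta p ^ k"
      by (simp add: power2_eq_square power_mult_distrib)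
    ultimately show "p k * (zeta p ^ 2) ^ k + 2 * C * (real k * p k * (zeta p ^ 2) ^ k)
                       + C ^ 2 * (real k * real k * p k * (zeta p ^ 2) ^ k)
                     = Efin p (\<lambda>t. real (ndeg k t)) ^ 2 / p k"
      by (cases "p k = 0") (simp_all add: field_simps power2_eq_square)
  qed
qed

lemma sigma_sq_one:
  defines "D \<equiv> mu p - deriv (deriv (gf p)) (zeta p)"
  shows "sigma_sq p (\<lambda>_. 1) = gf p (zeta p) + mu p ^ 2 * zeta p ^ 2 / D
      + 2 / mu p * (mu p ^ 2 * zeta p ^ 2 / D) ^ 2
      - (gf p (zeta p ^ 2) + 2 * (mu p / D) * (zeta p ^ 2 * deriv (gf p) (zeta p ^ 2))
         + (mu p / D) ^ 2 * (zeta p ^ 4 * deriv (deriv (gf p)) (zeta p ^ 2)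
                             + zeta p ^ 2 * deriv (gf p) (zeta p ^ 2)))"
proof -
  have "sigma_sq p (\<lambda>_. 1) = Efin p (\<lambda>t. real (nverts t)) + 2 / mu p * Efin p (\<lambda>t. real (nedges t)) ^ 2
          - (\<Sum>k. Efin p (\<lambda>t. real (ndeg k t)) ^ 2 / p k)"
    by (simp add: sigma_sq_def)
  then show ?thesis
    by (simp only: Efin_nverts Efin_nedges sums_unique[OF Efin_ndeg_sq_sums, symmetric] D_def)
qed

end

theorem lemma11p1:
  fixes p :: "nat \<Rightarrow> real"
  assumes nonneg: "\<And>k. p k \<ge> 0"
    and prob: "p sums 1"
    and mean_fin: "summable (\<lambda>k. real k * p k)"
    and mean_pos: "mu p > 0"
    and supcrit: "\<not> summable (\<lambda>k. real k * (real k - 2) * p k)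
                  \<or> (\<Sum>k. real k * (real k - 2) * p k) > 0"
  shows "sigma_sq p (\<lambda>_. 1) =
    (let f = gf p; f1 = deriv (gf p); f2 = deriv (deriv (gf p)); m = mu p; z = zeta p
     in f z + m^2 * z^2 / (m - f2 z) + 2 * (m^3 * z^4 / (m - f2 z)^2)
        - f (z^2) - 2 * (m * z^2 / (m - f2 z)) * f1 (z^2)
        - m^2 / (m - f2 z)^2 * (z^4 * f2 (z^2) + z^2 * f1 (z^2)))"
proof -
  interpret supercritical_offspring p
    using assms by unfold_locales
  define D where "D = mu p - deriv (deriv (gf p)) (zeta p)"
  have "0 < D" using deriv2_gf_zeta_less_mu unfolding D_def by simp
  then show ?thesis
    unfolding sigma_sq_one Let_def D_def[symmetric] using mu_pos
    by (simp add: field_simps power2_eq_square eval_nat_numeral)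
qed

end
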